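(* Let $(m,q,d,\tau)$ be suitable parameters (in the sense defined in the context) and let $\Pi$ be the shifted projection protocol for these parameters. Then $\Pi$ is informative and perfectly safe.
   Context: Agents: $\mathcal A=\{A,B_1,\dots,B_m\}$, speaking in the fixed order $A,B_1,\dots,B_m$. A distribution type is a vector $\tau=(\tau_P)_{P\in\mathcal A}$ of positive integers, $|\tau|=\sum_P\tau_P$. The deck $\Omega$ is a set of $|\tau|$ cards; a deal of type $\tau$ is a partition $H=(H_P)_{P\in\mathcal A}$ of $\Omega$ with $|H_P|=\tau_P$ ($H_P$ is the hand of $P$). Suitable parameters: $(m,q,d,\tau)$ with $m>1$, $q>m$ a prime power, $d>0$ an integer, $\tau$ a distribution type over $\mathcal A$ with $|\tau|=q^{d+1}$, $\tau_A=q^{d+1}-q^d$ and $\tau_{B_k}>q^{d-1}$ for every $k\in[1,m]$; the deck $\Omega$ has $q^{d+1}$ cards. Geometry over the field $\mathbb F_q$: a transversal hyperplane of $\mathbb F_q^{d+1}$ is the set of points $x$ with $x_{d+1}=a_1x_1+\dots+a_dx_d+b$ for some $a_1,\dots,a_d,b\in\mathbb F_q$; its slope is $\sigma(V)=(a_1,\dots,a_d)\in\mathbb F_q^d$. Let $\pi:\mathbb F_q^{d+1}\to\mathbb F_q^d$ be projection onto the first $d$ coordinates; for a transversal hyperplane $V$, $\pi|_V$ is a bijection onto $\mathbb F_q^d$ with inverse $\iota_V$. Define $\pi^V_{\downarrow}:V\to\mathbb F_q^d$, $\pi^V_\downarrow(w)=\pi(w)+\sigma(V)$, and $\pi^V_\uparrow:\mathbb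 F_q^d\to V$, $\pi^V_\uparrow(y)=\iota_V(y-\sigma(V))$. Shifted projection protocol: tokens are maps $f:\Omega\to\mathbb F_q^{d+1}$ and subsets of $\mathbb F_q^d$. A run is a finite sequence of tokens; $\rho*a$ appends $a$, $\rho_{<k}$ is the prefix of length $k$. For a deal $H$, its maximal executions are the tuples $(H,f,X_1,\dots,X_m)$ where $f:\Omega\to\mathbb F_q^{d+1}$ is a bijection such that $V=\mathbb F_q^{d+1}\setminus f[H_A]$ is a transversal hyperplane, and $X_k=\pi^V_\downarrow[f[H_{B_k}]]$ for each $k\in[1,m]$. Set $\Pi(H,\rho)$ = set of tokens $a$ such that $(H,\rho*a)$ is an initial segment of a maximal execution. An execution is a pair $(H,\rho)$, $\rho=a_0,\dots,a_n$, with $a_k\in\Pi(H,\rho_{<k})$ for all $k\le n$; $\rho$ is a run of $\Pi$ if some $(H,\rho)$ is an execution; an execution $(H,\rho)$ is terminal if $\Pi(H,\rho)=\emptyset$. Informative: for every terminal execution $(H,\rho)$ and every agent $P$, there is no execution $(H',\rho)$ with $H'\neq H$ and $H'_P=H_P$. Probability model: a deal $H$ of type $\tau$ is drawn uniformly at random; then starting from the empty run, while $\Pi(H,\rho)\ne\emptyset$ for the current run $\rho$, a token is drawn uniformly from $\Pi(H,\rho)$ and appended. For a run $\rho$, "$\rho$" is the event that the first $|\rho|$ tokens produced are exactly $\rho$. Perfectly safe: for every run $\rho$ of $\Pi$, every card $c\in\Omega$ and every agent $P$, $\Pr(c\in H_P\mid\rho)=\tau_P/|\tau|$. *)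

theory Defs
  imports Complex_Main "HOL-Library.FuncSet" "HOL-Library.Cardinality"
begin

text \<open>Agents are the natural numbers 0..m: agent 0 is A, agent k (1 \<le> k \<le> m) is B_k.
  The field F_q is a type 'a of class {finite, field}, so q = CARD('a).
  The space F_q^n is represented as functions nat \<Rightarrow> 'a vanishing from index n on
  (coordinates 0..n-1).  In F_q^(d+1) the last coordinate x_(d+1) is index d.\<close>

definition pts :: "nat \<Rightarrow> (nat \<Rightarrow> 'a::zero) set" where
  "pts n = {x. \<forall>i\<ge>n. x i = 0}"

definition hyperplane :: "nat \<Rightarrow> (nat \<Rightarrow> 'a::field) \<Rightarrow> 'a \<Rightarrow> (nat \<Rightarrow> 'a) set" where
  "hyperplane d a b = {x \<in> pts (Suc d). x d = (\<Sum>i<d. a i * x i) + b}"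

definition transversal :: "nat \<Rightarrow> (nat \<Rightarrow> 'a::field) set \<Rightarrow> bool" where
  "transversal d V \<longleftrightarrow> (\<exists>a\<in>pts d. \<exists>b. V = hyperplane d a b)"

definition slope :: "nat \<Rightarrow> (nat \<Rightarrow> 'a::field) set \<Rightarrow> nat \<Rightarrow> 'a" where
  "slope d V = (THE a. a \<in> pts d \<and> (\<exists>b. V = hyperplane d a b))"

definition proj :: "nat \<Rightarrow> (nat \<Rightarrow> 'a::zero) \<Rightarrow> nat \<Rightarrow> 'a" where
  "proj d x = (\<lambda>i. if i < d then x i else 0)"

definition proj_down :: "nat \<Rightarrow> (nat \<Rightarrow> 'a::field) set \<Rightarrow> (nat \<Rightarrow> 'a) \<Rightarrow> nat \<Rightarrow> 'a" where
  "proj_down d V w = (\<lambda>i. proj d w i + slope d V i)"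

definition is_deal :: "'c set \<Rightarrow> nat \<Rightarrow> (nat \<Rightarrow> nat) \<Rightarrow> (nat \<Rightarrow> 'c set) \<Rightarrow> bool" where
  "is_deal \<Omega> m \<tau> H \<longleftrightarrow>
     (\<forall>P\<le>m. H P \<subseteq> \<Omega> \<and> card (H P) = \<tau> P) \<and>
     (\<forall>P\<le>m. \<forall>Q\<le>m. P \<noteq> Q \<longrightarrow> H P \<inter> H Q = {}) \<and>
     (\<Union>P\<le>m. H P) = \<Omega> \<and> (\<forall>P>m. H P = {})"

text \<open>Tokens: maps Omega \<rightarrow> F_q^(d+1) (extensional on Omega) and subsets of F_q^d.\<close>
datatype ('c, 'a) token = Fmap "'c \<Rightarrow> nat \<Rightarrow> 'a" | Sub "(nat \<Rightarrow> 'a) set"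

definition max_exec :: "'c set \<Rightarrow> nat \<Rightarrow> nat \<Rightarrow> (nat \<Rightarrow> 'c set) \<Rightarrow> ('c, 'a::field) token list \<Rightarrow> bool" where
  "max_exec \<Omega> m d H L \<longleftrightarrow>
     (\<exists>f. f \<in> \<Omega> \<rightarrow>\<^sub>E pts (Suc d) \<and> bij_betw f \<Omega> (pts (Suc d)) \<and>
          transversal d (pts (Suc d) - f ` H 0) \<and>
          L = Fmap f # map (\<lambda>k. Sub (proj_down d (pts (Suc d) - f ` H 0) ` f ` H k)) [1..<Suc m])"

definition Pi_prot :: "'c set \<Rightarrow> nat \<Rightarrow> nat \<Rightarrow> (nat \<Rightarrow> 'c set) \<Rightarrow> ('c, 'a::field) token list \<Rightarrow> ('c, 'a) token set" where
  "Pi_prot \<Omega> m d H \<rho> = {a. \<exists>L L'. max_exec \<Omega> m d H L \<and> L = \<rho> @ [a] @ L'}"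

definition execution :: "'c set \<Rightarrow> nat \<Rightarrow> nat \<Rightarrow> (nat \<Rightarrow> 'c set) \<Rightarrow> ('c, 'a::field) token list \<Rightarrow> bool" where
  "execution \<Omega> m d H \<rho> \<longleftrightarrow> (\<forall>k<length \<rho>. \<rho> ! k \<in> Pi_prot \<Omega> m d H (take k \<rho>))"

definition is_run :: "'c set \<Rightarrow> nat \<Rightarrow> (nat \<Rightarrow> nat) \<Rightarrow> nat \<Rightarrow> ('c, 'a::field) token list \<Rightarrow> bool" where
  "is_run \<Omega> m \<tau> d \<rho> \<longleftrightarrow> (\<exists>H. is_deal \<Omega> m \<tau> H \<and> execution \<Omega> m d H \<rho>)"

definition terminal :: "'c set \<Rightarrow> nat \<Rightarrow> nat \<Rightarrow> (nat \<Rightarrow> 'c set) \<Rightarrow> ('c, 'a::field) token list \<Rightarrow> bool" where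
  "terminal \<Omega> m d H \<rho> \<longleftrightarrow> execution \<Omega> m d H \<rho> \<and> Pi_prot \<Omega> m d H \<rho> = {}"

definition informative :: "'a::field itself \<Rightarrow> 'c set \<Rightarrow> nat \<Rightarrow> (nat \<Rightarrow> nat) \<Rightarrow> nat \<Rightarrow> bool" where
  "informative _ \<Omega> m \<tau> d \<longleftrightarrow>
     (\<forall>H (\<rho> :: ('c, 'a) token list) P. is_deal \<Omega> m \<tau> H \<and> terminal \<Omega> m d H \<rho> \<and> P \<le> m \<longrightarrow>
        \<not> (\<exists>H'. is_deal \<Omega> m \<tau> H' \<and> execution \<Omega> m d H' \<rho> \<and> H' \<noteq> H \<and> H' P = H P))"

text \<open>Probability (given the deal H) that the first |rho| tokens are exactly rho, when
  tokens are drawn uniformly from Pi(H, current run) until it is empty.\<close>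
definition run_weight :: "'c set \<Rightarrow> nat \<Rightarrow> nat \<Rightarrow> (nat \<Rightarrow> 'c set) \<Rightarrow> ('c, 'a::field) token list \<Rightarrow> real" where
  "run_weight \<Omega> m d H \<rho> =
     (\<Prod>k<length \<rho>. if \<rho> ! k \<in> Pi_prot \<Omega> m d H (take k \<rho>)
                      then 1 / real (card (Pi_prot \<Omega> m d H (take k \<rho>))) else 0)"

text \<open>Pr(E(H) and rho), with H a uniformly random deal of type tau.\<close>
definition prob_and_run :: "'c set \<Rightarrow> nat \<Rightarrow> (nat \<Rightarrow> nat) \<Rightarrow> nat \<Rightarrow> ((nat \<Rightarrow> 'c set) \<Rightarrow> bool) \<Rightarrow> ('c, 'a::field) token list \<Rightarrow> real" where
  "prob_and_run \<Omega> m \<tau> d E \<rho> =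
     (\<Sum>H\<in>{H. is_deal \<Omega> m \<tau> H \<and> E H}. run_weight \<Omega> m d H \<rho>) / real (card {H. is_deal \<Omega> m \<tau> H})"

definition cond_prob :: "'c set \<Rightarrow> nat \<Rightarrow> (nat \<Rightarrow> nat) \<Rightarrow> nat \<Rightarrow> ((nat \<Rightarrow> 'c set) \<Rightarrow> bool) \<Rightarrow> ('c, 'a::field) token list \<Rightarrow> real" where
  "cond_prob \<Omega> m \<tau> d E \<rho> = prob_and_run \<Omega> m \<tau> d E \<rho> / prob_and_run \<Omega> m \<tau> d (\<lambda>_. True) \<rho>"

definition perfectly_safe :: "'a::field itself \<Rightarrow> 'c set \<Rightarrow> nat \<Rightarrow> (nat \<Rightarrow> nat) \<Rightarrow> nat \<Rightarrow> bool" where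
  "perfectly_safe _ \<Omega> m \<tau> d \<longleftrightarrow>
     (\<forall>(\<rho> :: ('c, 'a) token list) c P. is_run \<Omega> m \<tau> d \<rho> \<and> c \<in> \<Omega> \<and> P \<le> m \<longrightarrow>
        cond_prob \<Omega> m \<tau> d (\<lambda>H. c \<in> H P) \<rho> = real (\<tau> P) / real (\<Sum>Q\<le>m. \<tau> Q))"

end

theory Submission
  imports Defs
begin

text \<open>Relabelling the cards by a permutation \<open>\<sigma>\<close> transforms deals and runs simultaneously.
  If \<open>\<sigma>\<close> is transported, along the announced bijection \<open>f\<close>, from a shear of \<open>F\<^sup>d\<^sup>+\<^sup>1\<close>, then it
  maps the hyperplane \<open>V\<close> to another transversal hyperplane and leaves every announcement \<open>X\<^sub>k\<close>
  unchanged, so deals compatible with a run stay compatible with it. Shears act transitively on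
  points, hence given the run all cards are interchangeable, and double counting yields
  \<open>Pr(c \<in> H\<^sub>P | \<rho>) = \<tau>\<^sub>P / |\<tau>|\<close>.

  For informativity, each hand of a \<open>B\<^sub>k\<close> lies in \<open>V\<close> and has more than \<open>q\<^sup>d\<^sup>-\<^sup>1\<close> points, while
  two distinct transversal hyperplanes share at most \<open>q\<^sup>d\<^sup>-\<^sup>1\<close>. So any single hand determines \<open>V\<close>,
  hence \<open>H\<^sub>A\<close>, and the shifted projection, injective on \<open>V\<close>, recovers the other hands from the \<open>X\<^sub>k\<close>.\<close>

section \<open>Transversal hyperplanes\<close>

definition dot :: "nat \<Rightarrow> (nat \<Rightarrow> 'a::field) \<Rightarrow> (nat \<Rightarrow> 'a) \<Rightarrow> 'a" where
  "dot d u x = (\<Sum>i<d. u i * x i)"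

lemma dot_cong: "(\<And>i. i < d \<Longrightarrow> x i = y i) \<Longrightarrow> dot d u x = dot d u y"
  unfolding dot_def by (rule sum.cong) auto

lemma dot_eq_single:
  assumes "i < d" "\<And>j. j < d \<Longrightarrow> j \<noteq> i \<Longrightarrow> x j = 0"
  shows "dot d a x = a i * x i"
proof -
  have "dot d a x = (\<Sum>j<d. if j = i then a i * x i else 0)"
    unfolding dot_def by (rule sum.cong) (auto simp: assms)
  also have "\<dots> = a i * x i" using assms(1) by simp
  finally show ?thesis .
qed

lemma mem_hyperplane_iff: "x \<in> hyperplane d a b \<longleftrightarrow> x \<in> pts (Suc d) \<and> x d = dot d a x + b"
  by (simp add: hyperplane_def dot_def)

lemma pts_Suc_eqI:
  assumes "x \<in> pts (Suc d)" "y \<in> pts (Suc d)" "\<And>i. i < d \<Longrightarrow> x i = y i" "x d = y d"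
  shows "x = y"
proof
  fix i show "x i = y i"
    using assms by (cases i d rule: linorder_cases) (auto simp: pts_def)
qed

lemma hyperplane_unique:
  assumes a: "a \<in> pts d" and a': "a' \<in> pts d" and eq: "hyperplane d a b = hyperplane d a' b'"
  shows "a = a' \<and> b = b'"
proof -
  define z where "z = (\<lambda>j. if j = d then b else (0::'a))"
  have dz: "dot d c z = 0" for c unfolding dot_def by (rule sum.neutral) (auto simp: z_def)
  have "z \<in> hyperplane d a b" by (simp add: mem_hyperplane_iff dz) (auto simp: z_def pts_def)
  then have "z \<in> hyperplane d a' b'" using eq by simp
  then have bb: "b = b'" by (simp add: mem_hyperplane_iff dz) (simp add: z_def)
  have "a i = a' i" for i
  proof (cases "i < d")
    case True
    define e where "e = (\<lambda>j. if j = i then 1 else if j = d then a i + b else (0::'a))"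
    have de: "dot d c e = c i" for c using True by (subst dot_eq_single[of i]) (auto simp: e_def)
    have "e \<in> hyperplane d a b" using True by (simp add: mem_hyperplane_iff de) (auto simp: e_def pts_def)
    then have "e \<in> hyperplane d a' b'" using eq by simp
    then show ?thesis using True bb by (simp add: mem_hyperplane_iff de) (simp add: e_def)
  next
    case False
    then show ?thesis using a a' by (simp add: pts_def)
  qed
  then show ?thesis using bb by auto
qed

lemma slope_hyperplane: "a \<in> pts d \<Longrightarrow> slope d (hyperplane d a b) = a"
  unfolding slope_def by (rule the_equality) (auto dest: hyperplane_unique)

lemma hyperplane_zero: "hyperplane d (\<lambda>_. 0) 0 = (pts d :: (nat \<Rightarrow> 'a::field) set)"
  by (auto simp: mem_hyperplane_iff dot_def pts_def) (metis Suc_leI le_neq_implies_less)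

lemma inj_on_proj_down_hyperplane:
  assumes "a \<in> pts d"
  shows "inj_on (proj_down d (hyperplane d a b)) (hyperplane d a b)"
proof (rule inj_onI)
  fix x y assume x: "x \<in> hyperplane d a b" and y: "y \<in> hyperplane d a b"
    and e: "proj_down d (hyperplane d a b) x = proj_down d (hyperplane d a b) y"
  have c: "x i = y i" if "i < d" for i
    using fun_cong[OF e, of i] that by (simp add: proj_down_def proj_def)
  then have "dot d a x = dot d a y" by (rule dot_cong)
  then have "x d = y d" using x y by (simp add: mem_hyperplane_iff)
  with x y c show "x = y" by (intro pts_Suc_eqI[of x d y]) (simp_all add: mem_hyperplane_iff)
qed

lemma bij_betw_restrict_pts: "bij_betw (\<lambda>x. restrict x {..<n}) (pts n) ({..<n} \<rightarrow>\<^sub>E (UNIV::'a::zero set))"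
proof (rule bij_betw_byWitness[where f'="\<lambda>g i. if i < n then g i else 0"])
  show "\<forall>a\<in>pts n. (\<lambda>i. if i < n then restrict a {..<n} i else 0) = a"
    by (auto simp: pts_def fun_eq_iff)
  show "\<forall>a'\<in>{..<n} \<rightarrow>\<^sub>E UNIV. restrict (\<lambda>i. if i < n then a' i else 0) {..<n} = a'"
    by (auto simp: fun_eq_iff PiE_def extensional_def)
  show "(\<lambda>x. restrict x {..<n}) ` pts n \<subseteq> {..<n} \<rightarrow>\<^sub>E UNIV"
    by (intro image_subsetI) (simp only: restrict_PiE_iff, simp)
  show "(\<lambda>g i. if i < n then g i else 0) ` ({..<n} \<rightarrow>\<^sub>E UNIV) \<subseteq> pts n"
    by (intro image_subsetI) (simp add: pts_def)
qed

lemma finite_pts: "finite (pts n :: (nat \<Rightarrow> 'a::{finite,zero}) set)"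
  using bij_betw_finite[OF bij_betw_restrict_pts[where 'a='a]] by (simp add: finite_PiE)

lemma card_pts: "card (pts n :: (nat \<Rightarrow> 'a::{finite,zero}) set) = CARD('a) ^ n"
  using bij_betw_same_card[OF bij_betw_restrict_pts[where 'a='a, of n]] by (simp add: card_PiE)

lemma card_pts_coord_zero:
  assumes "i < d"
  shows "card {y \<in> pts d. y i = (0::'a::{finite,zero})} = CARD('a) ^ (d - 1)"
proof -
  let ?Z = "{y \<in> pts d. y i = (0::'a)}"
  have "bij_betw (\<lambda>(y,t). y(i:=t)) (?Z \<times> (UNIV::'a set)) (pts d)"
    by (rule bij_betw_byWitness[where f'="\<lambda>x. (x(i:=0), x i)"])
       (use assms in \<open>auto simp: pts_def fun_eq_iff\<close>)
  then have "card (?Z \<times> (UNIV::'a set)) = card (pts d :: (nat \<Rightarrow> 'a) set)"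
    by (rule bij_betw_same_card)
  then have "card ?Z * CARD('a) = CARD('a) ^ d"
    by (simp add: card_cartesian_product card_pts)
  moreover have "CARD('a) ^ d = CARD('a) ^ (d - 1) * CARD('a)"
    using assms by (metis Suc_diff_1 gr_implies_not0 mult.commute not_gr_zero power_Suc)
  ultimately show ?thesis by simp
qed

lemma finite_hyperplane: "finite (hyperplane d a (b::'a::{finite,field}))"
  by (rule finite_subset[OF _ finite_pts[of "Suc d"]]) (auto simp: mem_hyperplane_iff)

lemma hyperplane_Int_eqI:
  assumes x: "x \<in> hyperplane d a b \<inter> hyperplane d a' b'" and y: "y \<in> hyperplane d a b \<inter> hyperplane d a' b'"
    and i: "i < d" "a i \<noteq> a' i" and agree: "\<And>j. j < d \<Longrightarrow> j \<noteq> i \<Longrightarrow> x j = y j"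
  shows "x = y"
proof -
  have "dot d (\<lambda>j. a j - a' j) (\<lambda>j. x j - y j) = (a i - a' i) * (x i - y i)"
    by (rule dot_eq_single) (use i agree in auto)
  moreover have "dot d (\<lambda>j. a j - a' j) (\<lambda>j. x j - y j) = (dot d a x - dot d a' x) - (dot d a y - dot d a' y)"
    by (simp add: dot_def algebra_simps sum.distrib sum_subtractf)
  moreover have "dot d a x + b = dot d a' x + b'" "dot d a y + b = dot d a' y + b'"
    using x y by (auto simp: mem_hyperplane_iff)
  then have "dot d a x - dot d a' x = b' - b" "dot d a y - dot d a' y = b' - b"
    by (simp_all add: algebra_simps)
  ultimately have "(a i - a' i) * (x i - y i) = 0" by simp
  then have "x i = y i" using i by simp
  then have c: "x j = y j" if "j < d" for j using agree that by (cases "j = i") auto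
  then have "dot d a x = dot d a y" by (rule dot_cong)
  then have "x d = y d" using x y by (simp add: mem_hyperplane_iff)
  with x y c show "x = y" by (intro pts_Suc_eqI[of x d y]) (simp_all add: mem_hyperplane_iff)
qed

lemma card_hyperplane_Int_le:
  fixes a a' :: "nat \<Rightarrow> 'a::{finite,field}"
  assumes a: "a \<in> pts d" and a': "a' \<in> pts d" and ne: "hyperplane d a b \<noteq> hyperplane d a' b'"
  shows "card (hyperplane d a b \<inter> hyperplane d a' b') \<le> CARD('a) ^ (d - 1)"
proof (cases "a = a'")
  case True
  then have "hyperplane d a b \<inter> hyperplane d a' b' = {}" using ne by (auto simp: mem_hyperplane_iff)
  then show ?thesis by simp
next
  case False
  then obtain i where ai: "a i \<noteq> a' i" by auto
  have i: "i < d" by (rule ccontr) (use a a' ai in \<open>simp add: pts_def\<close>)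
  let ?I = "hyperplane d a b \<inter> hyperplane d a' b'"
  let ?Z = "{y \<in> pts d. y i = (0::'a)}"
  \<comment> \<open>On the intersection the coordinate \<open>i\<close> is determined by the others, so forgetting it is injective.\<close>
  define \<psi> where "\<psi> x = (\<lambda>j. if j < d \<and> j \<noteq> i then x j else (0::'a))" for x :: "nat \<Rightarrow> 'a"
  have "inj_on \<psi> ?I"
  proof (rule inj_onI)
    fix x y assume x: "x \<in> ?I" and y: "y \<in> ?I" and e: "\<psi> x = \<psi> y"
    have "x j = y j" if "j < d" "j \<noteq> i" for j using fun_cong[OF e, of j] that by (simp add: \<psi>_def)
    then show "x = y" by (rule hyperplane_Int_eqI[OF x y i ai])
  qed
  then have "card ?I = card (\<psi> ` ?I)" by (simp add: card_image)
  also have "\<dots> \<le> card ?Z"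
  proof (rule card_mono)
    show "finite ?Z" by (rule finite_subset[OF _ finite_pts]) auto
    show "\<psi> ` ?I \<subseteq> ?Z" by (auto simp: \<psi>_def pts_def)
  qed
  finally show ?thesis using card_pts_coord_zero[OF i, where 'a='a] by simp
qed

section \<open>Shears\<close>

text \<open>The shear \<open>(y, t) \<mapsto> (y + u, t - u\<cdot>y + s)\<close> of \<open>F\<^sup>d \<times> F\<close> changes the slope of every transversal
  hyperplane by \<open>-u\<close> while translating \<open>\<pi>\<close> by \<open>u\<close>; so it commutes with the shifted projection.\<close>

definition shear :: "nat \<Rightarrow> (nat \<Rightarrow> 'a::field) \<Rightarrow> 'a \<Rightarrow> (nat \<Rightarrow> 'a) \<Rightarrow> nat \<Rightarrow> 'a" where
  "shear d u s x = (\<lambda>i. if i < d then x i + u i else if i = d then x d - dot d u x + s else 0)"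

definition unshear :: "nat \<Rightarrow> (nat \<Rightarrow> 'a::field) \<Rightarrow> 'a \<Rightarrow> (nat \<Rightarrow> 'a) \<Rightarrow> nat \<Rightarrow> 'a" where
  "unshear d u s y = (\<lambda>i. if i < d then y i - u i else if i = d then y d + dot d u (\<lambda>j. y j - u j) - s else 0)"

lemma shear_in_pts: "shear d u s x \<in> pts (Suc d)"
  by (auto simp: shear_def pts_def)

lemma unshear_in_pts: "unshear d u s x \<in> pts (Suc d)"
  by (auto simp: unshear_def pts_def)

lemma shear_unshear: "y \<in> pts (Suc d) \<Longrightarrow> shear d u s (unshear d u s y) = y"
proof -
  assume y: "y \<in> pts (Suc d)"
  have "dot d u (unshear d u s y) = dot d u (\<lambda>j. y j - u j)"
    by (rule dot_cong) (auto simp: unshear_def)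
  then show ?thesis using y by (auto simp: shear_def unshear_def fun_eq_iff pts_def)
qed

lemma unshear_shear: "x \<in> pts (Suc d) \<Longrightarrow> unshear d u s (shear d u s x) = x"
proof -
  assume x: "x \<in> pts (Suc d)"
  have "dot d u (\<lambda>j. shear d u s x j - u j) = dot d u x"
    by (rule dot_cong) (auto simp: shear_def)
  then show ?thesis using x by (auto simp: shear_def unshear_def fun_eq_iff pts_def)
qed

lemma bij_betw_shear: "bij_betw (shear d u s) (pts (Suc d)) (pts (Suc d))"
  by (rule bij_betw_byWitness[where f'="unshear d u s"])
     (auto simp: shear_unshear unshear_shear shear_in_pts unshear_in_pts)

lemma shear_last_minus_dot:
  "shear d u s x d - dot d (\<lambda>i. a i - u i) (shear d u s x) =
   x d - dot d a x + (s - dot d a u + dot d u u)"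
proof -
  have "dot d (\<lambda>i. a i - u i) (shear d u s x) = (\<Sum>i<d. (a i - u i) * (x i + u i))"
    unfolding dot_def by (rule sum.cong) (auto simp: shear_def)
  also have "\<dots> = dot d a x + dot d a u - dot d u x - dot d u u"
    by (simp add: dot_def algebra_simps sum.distrib sum_subtractf)
  finally show ?thesis by (simp add: shear_def)
qed

lemma shear_image_hyperplane:
  "shear d u s ` hyperplane d a b = hyperplane d (\<lambda>i. a i - u i) (b + (s - dot d a u + dot d u u))"
  (is "?L = ?R")
proof
  show "?L \<subseteq> ?R"
  proof
    fix y assume "y \<in> ?L"
    then obtain x where x: "x \<in> hyperplane d a b" "y = shear d u s x" by auto
    show "y \<in> ?R"
      using x shear_last_minus_dot[of d u s x a] by (auto simp: mem_hyperplane_iff shear_in_pts algebra_simps)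
  qed
  show "?R \<subseteq> ?L"
  proof
    fix y assume y: "y \<in> ?R"
    then have yp: "y \<in> pts (Suc d)" by (simp add: mem_hyperplane_iff)
    define x where "x = unshear d u s y"
    have yx: "y = shear d u s x" using yp by (simp add: x_def shear_unshear)
    have "y d - dot d (\<lambda>i. a i - u i) y = b + (s - dot d a u + dot d u u)"
      using y by (simp add: mem_hyperplane_iff diff_eq_eq)
    then have "x d - dot d a x = b"
      using shear_last_minus_dot[of d u s x a] yx by simp
    then have "x \<in> hyperplane d a b"
      by (simp add: mem_hyperplane_iff x_def unshear_in_pts diff_eq_eq)
    then show "y \<in> ?L" using yx by auto
  qed
qed

lemma proj_down_shear:
  assumes a: "a \<in> pts d" and u: "u \<in> pts d"
  shows "proj_down d (shear d u s ` hyperplane d a b) (shear d u s w) = proj_down d (hyperplane d a b) w"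
proof -
  have "(\<lambda>i. a i - u i) \<in> pts d" using a u by (simp add: pts_def)
  then have "slope d (shear d u s ` hyperplane d a b) = (\<lambda>i. a i - u i)"
    by (simp add: shear_image_hyperplane slope_hyperplane)
  then show ?thesis
    using a u by (auto simp: proj_down_def slope_hyperplane proj_def shear_def fun_eq_iff pts_def)
qed

lemma shear_transitive:
  assumes "p \<in> pts (Suc d)" "p' \<in> pts (Suc d)"
  obtains u s where "u \<in> pts d" "shear d u s p = p'"
proof
  define u where "u = (\<lambda>i. if i < d then p' i - p i else 0)"
  show "u \<in> pts d" by (simp add: u_def pts_def)
  show "shear d u (p' d - p d + dot d u p) p = p'"
    using assms by (auto simp: shear_def u_def fun_eq_iff pts_def not_less_eq)
qed

section \<open>Executions of the protocol\<close>

definition admissible :: "'c set \<Rightarrow> nat \<Rightarrow> 'c set \<Rightarrow> ('c \<Rightarrow> nat \<Rightarrow> 'a::field) set" where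
  "admissible \<Omega> d X =
     {f. f \<in> \<Omega> \<rightarrow>\<^sub>E pts (Suc d) \<and> bij_betw f \<Omega> (pts (Suc d)) \<and> transversal d (pts (Suc d) - f ` X)}"

definition full_run :: "'c set \<Rightarrow> nat \<Rightarrow> nat \<Rightarrow> (nat \<Rightarrow> 'c set) \<Rightarrow> ('c \<Rightarrow> nat \<Rightarrow> 'a::field) \<Rightarrow> ('c, 'a) token list" where
  "full_run \<Omega> m d H f = Fmap f # map (\<lambda>k. Sub (proj_down d (pts (Suc d) - f ` H 0) ` f ` H k)) [1..<Suc m]"

lemma max_exec_iff: "max_exec \<Omega> m d H L \<longleftrightarrow> (\<exists>f\<in>admissible \<Omega> d (H 0). L = full_run \<Omega> m d H f)"
  by (auto simp: max_exec_def admissible_def full_run_def)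

lemma length_full_run [simp]: "length (full_run \<Omega> m d H f) = Suc m"
  by (simp add: full_run_def)

lemma hd_full_run [simp]: "hd (full_run \<Omega> m d H f) = Fmap f"
  by (simp add: full_run_def)

lemma max_exec_hd:
  assumes "max_exec \<Omega> m d H L" "hd L = Fmap f"
  shows "f \<in> admissible \<Omega> d (H 0) \<and> L = full_run \<Omega> m d H f"
  using assms by (auto simp: max_exec_iff)

lemma Pi_prot_Nil: "Pi_prot \<Omega> m d H [] = Fmap ` admissible \<Omega> d (H 0)"
  by (auto simp: Pi_prot_def max_exec_iff full_run_def)

lemma execution_iff_prefix:
  "execution \<Omega> m d H \<rho> \<longleftrightarrow> \<rho> = [] \<or> (\<exists>L'. max_exec \<Omega> m d H (\<rho> @ L'))"
proof
  assume e: "execution \<Omega> m d H \<rho>"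
  show "\<rho> = [] \<or> (\<exists>L'. max_exec \<Omega> m d H (\<rho> @ L'))"
  proof (cases "\<rho> = []")
    case False
    let ?k = "length \<rho> - 1"
    have "\<rho> ! ?k \<in> Pi_prot \<Omega> m d H (take ?k \<rho>)" using e False by (simp add: execution_def)
    then obtain L' where "max_exec \<Omega> m d H (take ?k \<rho> @ [\<rho> ! ?k] @ L')"
      by (auto simp: Pi_prot_def)
    moreover have "take ?k \<rho> @ [\<rho> ! ?k] = \<rho>"
      using False by (metis append_butlast_last_id butlast_conv_take last_conv_nth)
    ultimately show ?thesis by (metis append.assoc)
  qed simp
next
  assume h: "\<rho> = [] \<or> (\<exists>L'. max_exec \<Omega> m d H (\<rho> @ L'))"
  show "execution \<Omega> m d H \<rho>"
    unfolding execution_def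
  proof (intro allI impI)
    fix k assume k: "k < length \<rho>"
    then obtain L' where L: "max_exec \<Omega> m d H (\<rho> @ L')" using h by auto
    have "\<rho> @ L' = take k \<rho> @ [\<rho> ! k] @ (drop (Suc k) \<rho> @ L')"
      using id_take_nth_drop[OF k] by simp
    with L show "\<rho> ! k \<in> Pi_prot \<Omega> m d H (take k \<rho>)" unfolding Pi_prot_def by auto
  qed
qed

lemma execution_first_token:
  assumes "execution \<Omega> m d H \<rho>" "\<rho> \<noteq> []"
  obtains f where "f \<in> admissible \<Omega> d (H 0)" "\<rho> ! 0 = Fmap f"
proof -
  have "\<rho> ! 0 \<in> Pi_prot \<Omega> m d H (take 0 \<rho>)"
    using assms unfolding execution_def by (metis length_greater_0_conv)
  then show ?thesis using that by (auto simp: Pi_prot_Nil)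
qed

lemma Pi_prot_after_first:
  assumes e: "execution \<Omega> m d H \<rho>" and k: "0 < k" "k < length \<rho>"
  shows "Pi_prot \<Omega> m d H (take k \<rho>) = {\<rho> ! k}"
proof -
  have mem: "\<rho> ! k \<in> Pi_prot \<Omega> m d H (take k \<rho>)" using e k by (simp add: execution_def)
  have "a = \<rho> ! k" if a: "a \<in> Pi_prot \<Omega> m d H (take k \<rho>)" for a
  proof -
    obtain L1 L1' where L1: "max_exec \<Omega> m d H L1" "L1 = take k \<rho> @ [a] @ L1'"
      using a by (auto simp: Pi_prot_def)
    obtain L2 L2' where L2: "max_exec \<Omega> m d H L2" "L2 = take k \<rho> @ [\<rho> ! k] @ L2'"
      using mem by (auto simp: Pi_prot_def)
    obtain f where f: "hd L1 = Fmap f" using L1 max_exec_iff by (metis hd_full_run)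
    have "take k \<rho> \<noteq> []" using k by (cases \<rho>) auto
    then have "hd L2 = hd L1" using L1(2) L2(2) by (simp add: hd_append)
    then have "L1 = L2" using L1(1) L2(1) f max_exec_hd by metis
    then show ?thesis using L1(2) L2(2) k by (simp add: nth_append)
  qed
  then show ?thesis using mem by blast
qed

text \<open>Only the first token, the map \<open>f\<close>, is drawn at random: the probability of producing an
  execution \<open>\<rho>\<close> is \<open>1 / |admissible|\<close>, or \<open>1\<close> for the empty run.\<close>

definition exec_weight :: "'c set \<Rightarrow> nat \<Rightarrow> ('c, 'a::field) token list \<Rightarrow> (nat \<Rightarrow> 'c set) \<Rightarrow> real" where
  "exec_weight \<Omega> d \<rho> H =
     (if \<rho> = [] then 1 else 1 / real (card (admissible \<Omega> d (H 0) :: ('c \<Rightarrow> nat \<Rightarrow> 'a) set)))"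

lemma exec_weight_nonneg: "exec_weight \<Omega> d \<rho> H \<ge> 0"
  by (simp add: exec_weight_def)

lemma run_weight_eq:
  "run_weight \<Omega> m d H \<rho> = (if execution \<Omega> m d H \<rho> then exec_weight \<Omega> d \<rho> H else 0)"
proof (cases "execution \<Omega> m d H \<rho>")
  case False
  then obtain k where k: "k < length \<rho>" "\<rho> ! k \<notin> Pi_prot \<Omega> m d H (take k \<rho>)"
    by (auto simp: execution_def)
  then show ?thesis using False unfolding run_weight_def
    by (intro trans[OF prod_zero]) (auto intro!: bexI[of _ k])
next
  case True
  let ?w = "exec_weight \<Omega> d \<rho> H"
  have "run_weight \<Omega> m d H \<rho> = (\<Prod>k<length \<rho>. if k = 0 then ?w else 1)"
    unfolding run_weight_def
  proof (rule prod.cong[OF refl])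
    fix k assume "k \<in> {..<length \<rho>}"
    then have k: "k < length \<rho>" by simp
    then have mem: "\<rho> ! k \<in> Pi_prot \<Omega> m d H (take k \<rho>)" using True by (simp add: execution_def)
    show "(if \<rho> ! k \<in> Pi_prot \<Omega> m d H (take k \<rho>) then 1 / real (card (Pi_prot \<Omega> m d H (take k \<rho>))) else 0) =
          (if k = 0 then ?w else 1)"
    proof (cases "k = 0")
      case True
      then show ?thesis using mem k by (simp add: Pi_prot_Nil card_image inj_on_def exec_weight_def)
    next
      case False
      then show ?thesis using mem Pi_prot_after_first[OF \<open>execution \<Omega> m d H \<rho>\<close> _ k] by simp
    qed
  qed
  also have "\<dots> = (if \<rho> = [] then 1 else ?w)"
  proof (cases "\<rho> = []")
    case False
    then have "{..<length \<rho>} = insert 0 {1..<length \<rho>}" by auto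
    then show ?thesis using False by (simp add: prod.If_cases)
  qed simp
  finally show ?thesis using True by (simp add: exec_weight_def)
qed

section \<open>Relabelling the cards\<close>

definition relabel :: "('c \<Rightarrow> 'c) \<Rightarrow> (nat \<Rightarrow> 'c set) \<Rightarrow> nat \<Rightarrow> 'c set" where
  "relabel \<sigma> H = (\<lambda>P. \<sigma> ` H P)"

lemma is_deal_subset: "is_deal \<Omega> m \<tau> H \<Longrightarrow> H P \<subseteq> \<Omega>"
  by (cases "P \<le> m") (auto simp: is_deal_def)

lemma finite_deals:
  assumes "finite \<Omega>"
  shows "finite {H. is_deal \<Omega> m \<tau> H}"
proof (rule finite_subset)
  show "{H. is_deal \<Omega> m \<tau> H} \<subseteq> (\<lambda>g P. if P \<le> m then g P else {}) ` ({..m} \<rightarrow>\<^sub>E Pow \<Omega>)"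
  proof
    fix H assume H: "H \<in> {H. is_deal \<Omega> m \<tau> H}"
    have "H = (\<lambda>P. if P \<le> m then restrict H {..m} P else {})"
      using H by (auto simp: is_deal_def fun_eq_iff)
    moreover have "restrict H {..m} \<in> {..m} \<rightarrow>\<^sub>E Pow \<Omega>"
      using H by (auto simp: is_deal_def)
    ultimately show "H \<in> (\<lambda>g P. if P \<le> m then g P else {}) ` ({..m} \<rightarrow>\<^sub>E Pow \<Omega>)" by blast
  qed
  show "finite ((\<lambda>g P. if P \<le> m then g P else {}) ` ({..m} \<rightarrow>\<^sub>E Pow \<Omega>))"
    using assms by (intro finite_imageI finite_PiE) auto
qed

lemma is_deal_relabel:
  assumes s: "bij_betw \<sigma> \<Omega> \<Omega>" and H: "is_deal \<Omega> m \<tau> H"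
  shows "is_deal \<Omega> m \<tau> (relabel \<sigma> H)"
proof -
  have inj: "inj_on \<sigma> \<Omega>" and im: "\<sigma> ` \<Omega> = \<Omega>" using s by (auto simp: bij_betw_def)
  have sub: "H P \<subseteq> \<Omega>" for P using H by (rule is_deal_subset)
  have "\<sigma> ` H P \<subseteq> \<Omega> \<and> card (\<sigma> ` H P) = \<tau> P" if "P \<le> m" for P
    using sub[of P] H that inj im by (auto simp: is_deal_def card_image inj_on_subset)
  moreover have "\<sigma> ` H P \<inter> \<sigma> ` H Q = {}" if "P \<le> m" "Q \<le> m" "P \<noteq> Q" for P Q
  proof -
    have "\<sigma> ` H P \<inter> \<sigma> ` H Q = \<sigma> ` (H P \<inter> H Q)"
      using inj sub by (simp add: inj_on_image_Int)
    then show ?thesis using H that by (simp add: is_deal_def)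
  qed
  moreover have "(\<Union>P\<le>m. \<sigma> ` H P) = \<Omega>"
    using H im by (simp add: is_deal_def flip: image_UN)
  moreover have "\<forall>P>m. \<sigma> ` H P = {}" using H by (simp add: is_deal_def)
  ultimately show ?thesis by (simp add: is_deal_def relabel_def)
qed

lemma inj_on_relabel:
  assumes "bij_betw \<sigma> \<Omega> \<Omega>"
  shows "inj_on (relabel \<sigma>) {H. is_deal \<Omega> m \<tau> H}"
proof (rule inj_onI)
  fix H1 H2 assume h: "H1 \<in> {H. is_deal \<Omega> m \<tau> H}" "H2 \<in> {H. is_deal \<Omega> m \<tau> H}"
    and e: "relabel \<sigma> H1 = relabel \<sigma> H2"
  have inj: "inj_on \<sigma> \<Omega>" using assms by (simp add: bij_betw_def)
  show "H1 = H2"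
  proof
    fix P
    have "\<sigma> ` H1 P = \<sigma> ` H2 P" using e by (simp add: relabel_def fun_eq_iff)
    moreover have "H1 P \<subseteq> \<Omega>" "H2 P \<subseteq> \<Omega>" using h by (simp_all add: is_deal_subset)
    ultimately show "H1 P = H2 P" using inj by (simp add: inj_on_image_eq_iff)
  qed
qed

lemma admissible_comp_perm:
  assumes s: "bij_betw \<sigma> \<Omega> \<Omega>" and X: "X \<subseteq> \<Omega>" and g: "g \<in> admissible \<Omega> d (\<sigma> ` X)"
  shows "restrict (g \<circ> \<sigma>) \<Omega> \<in> admissible \<Omega> d X"
proof -
  have gE: "g \<in> \<Omega> \<rightarrow>\<^sub>E pts (Suc d)" and gb: "bij_betw g \<Omega> (pts (Suc d))"
    and gt: "transversal d (pts (Suc d) - g ` \<sigma> ` X)" using g by (auto simp: admissible_def)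
  have "\<forall>x\<in>\<Omega>. (g \<circ> \<sigma>) x \<in> pts (Suc d)" using gE s by (auto simp: PiE_iff bij_betw_def)
  then have "restrict (g \<circ> \<sigma>) \<Omega> \<in> \<Omega> \<rightarrow>\<^sub>E pts (Suc d)" by (simp only: restrict_PiE_iff)
  moreover have "bij_betw (restrict (g \<circ> \<sigma>) \<Omega>) \<Omega> (pts (Suc d))"
    using bij_betw_cong[of \<Omega> "restrict (g \<circ> \<sigma>) \<Omega>" "g \<circ> \<sigma>"] bij_betw_trans[OF s gb] by simp
  moreover have "restrict (g \<circ> \<sigma>) \<Omega> ` X = g ` \<sigma> ` X" using X by (auto simp: image_iff)
  ultimately show ?thesis using gt by (simp add: admissible_def)
qed

lemma card_admissible_perm_image:
  assumes s: "bij_betw \<sigma> \<Omega> \<Omega>" and X: "X \<subseteq> \<Omega>"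
  shows "card (admissible \<Omega> d (\<sigma> ` X) :: ('c \<Rightarrow> nat \<Rightarrow> 'a::field) set) = card (admissible \<Omega> d X :: ('c \<Rightarrow> nat \<Rightarrow> 'a) set)"
proof -
  let ?s = "inv_into \<Omega> \<sigma>"
  have s': "bij_betw ?s \<Omega> \<Omega>" using s by (rule bij_betw_inv_into)
  have inj: "inj_on \<sigma> \<Omega>" using s by (simp add: bij_betw_def)
  have sm: "\<sigma> x \<in> \<Omega>" "?s x \<in> \<Omega>" if "x \<in> \<Omega>" for x using s s' that by (auto simp: bij_betw_def)
  have inv: "\<sigma> (?s x) = x" "?s (\<sigma> x) = x" if "x \<in> \<Omega>" for x
    using s inj that by (simp_all add: bij_betw_def f_inv_into_f)
  have ext: "g \<in> extensional \<Omega>" if "g \<in> admissible \<Omega> d Y" for g :: "'c \<Rightarrow> nat \<Rightarrow> 'a" and Y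
    using that by (auto simp: admissible_def PiE_def)
  have "bij_betw (\<lambda>g. restrict (g \<circ> \<sigma>) \<Omega>) (admissible \<Omega> d (\<sigma> ` X) :: ('c \<Rightarrow> nat \<Rightarrow> 'a) set) (admissible \<Omega> d X)"
  proof (rule bij_betw_byWitness[where f'="\<lambda>g. restrict (g \<circ> ?s) \<Omega>"])
    show "\<forall>g\<in>admissible \<Omega> d (\<sigma> ` X). restrict (restrict (g \<circ> \<sigma>) \<Omega> \<circ> ?s) \<Omega> = (g :: 'c \<Rightarrow> nat \<Rightarrow> 'a)"
      using ext by (fastforce simp: fun_eq_iff sm inv extensional_def)
    show "\<forall>g\<in>admissible \<Omega> d X. restrict (restrict (g \<circ> ?s) \<Omega> \<circ> \<sigma>) \<Omega> = (g :: 'c \<Rightarrow> nat \<Rightarrow> 'a)"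
      using ext by (fastforce simp: fun_eq_iff sm inv extensional_def)
    show "(\<lambda>g. restrict (g \<circ> \<sigma>) \<Omega>) ` admissible \<Omega> d (\<sigma> ` X) \<subseteq> admissible \<Omega> d X"
      using admissible_comp_perm[OF s X] by blast
    have "\<sigma> ` X \<subseteq> \<Omega>" "?s ` \<sigma> ` X = X" using s X inj by (auto simp: bij_betw_def)
    then show "(\<lambda>g. restrict (g \<circ> ?s) \<Omega>) ` admissible \<Omega> d X \<subseteq> admissible \<Omega> d (\<sigma> ` X)"
      using admissible_comp_perm[OF s'] by (metis image_subsetI)
  qed
  then show ?thesis by (rule bij_betw_same_card)
qed

lemma exec_weight_relabel:
  "bij_betw \<sigma> \<Omega> \<Omega> \<Longrightarrow> H 0 \<subseteq> \<Omega> \<Longrightarrow> exec_weight \<Omega> d \<rho> (relabel \<sigma> H) = exec_weight \<Omega> d \<rho> H"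
  by (simp add: exec_weight_def relabel_def card_admissible_perm_image)

lemma shear_permutation:
  fixes f :: "'c \<Rightarrow> nat \<Rightarrow> 'a::field"
  assumes f: "bij_betw f \<Omega> (pts (Suc d))"
  obtains \<sigma> where "bij_betw \<sigma> \<Omega> \<Omega>" "\<And>x. x \<in> \<Omega> \<Longrightarrow> f (\<sigma> x) = shear d u s (f x)"
proof
  define \<sigma> where "\<sigma> = (\<lambda>x. inv_into \<Omega> f (shear d u s (f x)))"
  have "bij_betw (inv_into \<Omega> f \<circ> (shear d u s \<circ> f)) \<Omega> \<Omega>"
    by (rule bij_betw_trans[OF bij_betw_trans[OF f bij_betw_shear] bij_betw_inv_into[OF f]])
  then show "bij_betw \<sigma> \<Omega> \<Omega>" by (simp add: \<sigma>_def comp_def)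
  fix x assume "x \<in> \<Omega>"
  then have "shear d u s (f x) \<in> f ` \<Omega>" using f shear_in_pts by (auto simp: bij_betw_def)
  then show "f (\<sigma> x) = shear d u s (f x)" by (simp add: \<sigma>_def f_inv_into_f)
qed

context
  fixes \<Omega> :: "'c set" and d :: nat and f :: "'c \<Rightarrow> nat \<Rightarrow> 'a::field" and u s \<sigma>
  assumes f: "bij_betw f \<Omega> (pts (Suc d))" and u: "u \<in> pts d"
    and \<sigma>: "\<And>x. x \<in> \<Omega> \<Longrightarrow> f (\<sigma> x) = shear d u s (f x)"
begin

lemma image_relabel_shear: "A \<subseteq> \<Omega> \<Longrightarrow> f ` \<sigma> ` A = shear d u s ` f ` A"
  using \<sigma> by (auto simp: image_iff) (metis subsetD)+

lemma complement_relabel_shear: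
  assumes "X \<subseteq> \<Omega>"
  shows "pts (Suc d) - f ` \<sigma> ` X = shear d u s ` (pts (Suc d) - f ` X)"
proof -
  have inj: "inj_on (shear d u s) (pts (Suc d))" and im: "shear d u s ` pts (Suc d) = pts (Suc d)"
    using bij_betw_shear[of d u s] by (simp_all add: bij_betw_def)
  have "f ` X \<subseteq> pts (Suc d)" using f assms by (auto simp: bij_betw_def)
  then have "shear d u s ` (pts (Suc d) - f ` X) = pts (Suc d) - shear d u s ` f ` X"
    using inj im by (simp add: inj_on_image_set_diff)
  then show ?thesis using image_relabel_shear[OF assms] by simp
qed

lemma admissible_relabel_shear:
  assumes "f \<in> admissible \<Omega> d X" "X \<subseteq> \<Omega>"
  shows "f \<in> admissible \<Omega> d (\<sigma> ` X)"
proof -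
  obtain a b where a: "a \<in> pts d" and V: "pts (Suc d) - f ` X = hyperplane d a b"
    using assms by (auto simp: admissible_def transversal_def)
  have "(\<lambda>i. a i - u i) \<in> pts d" using a u by (simp add: pts_def)
  then have "transversal d (pts (Suc d) - f ` \<sigma> ` X)"
    unfolding complement_relabel_shear[OF assms(2)] V shear_image_hyperplane transversal_def by blast
  then show ?thesis using assms by (simp add: admissible_def)
qed

lemma full_run_relabel_shear:
  assumes f_adm: "f \<in> admissible \<Omega> d (H 0)" and HS: "\<And>P. H P \<subseteq> \<Omega>"
  shows "full_run \<Omega> m d (relabel \<sigma> H) f = full_run \<Omega> m d H f"
proof -
  obtain a b where a: "a \<in> pts d" and V: "pts (Suc d) - f ` H 0 = hyperplane d a b"
    using f_adm by (auto simp: admissible_def transversal_def)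
  have V': "pts (Suc d) - f ` \<sigma> ` H 0 = shear d u s ` hyperplane d a b"
    using complement_relabel_shear[OF HS] V by simp
  have "proj_down d (pts (Suc d) - f ` \<sigma> ` H 0) ` f ` \<sigma> ` H k
      = proj_down d (pts (Suc d) - f ` H 0) ` f ` H k" for k
  proof -
    have "proj_down d (pts (Suc d) - f ` \<sigma> ` H 0) ` f ` \<sigma> ` H k
        = proj_down d (shear d u s ` hyperplane d a b) ` shear d u s ` f ` H k"
      using V' image_relabel_shear[OF HS] by (simp only:)
    also have "\<dots> = proj_down d (pts (Suc d) - f ` H 0) ` f ` H k"
      by (simp add: V image_image proj_down_shear[OF a u])
    finally show ?thesis .
  qed
  then show ?thesis by (simp add: full_run_def relabel_def)
qed

lemma execution_relabel_shear:
  assumes e: "execution \<Omega> m d H \<rho>" and \<rho>: "\<rho> \<noteq> []" "\<rho> ! 0 = Fmap f" and HS: "\<And>P. H P \<subseteq> \<Omega>"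
  shows "execution \<Omega> m d (relabel \<sigma> H) \<rho>"
proof -
  obtain L' where L: "max_exec \<Omega> m d H (\<rho> @ L')" using e \<rho> by (auto simp: execution_iff_prefix)
  have "hd (\<rho> @ L') = Fmap f" using \<rho> by (cases \<rho>) auto
  then have "f \<in> admissible \<Omega> d (H 0)" "\<rho> @ L' = full_run \<Omega> m d H f" using max_exec_hd L by blast+
  then have "f \<in> admissible \<Omega> d (relabel \<sigma> H 0)" "\<rho> @ L' = full_run \<Omega> m d (relabel \<sigma> H) f"
    using admissible_relabel_shear full_run_relabel_shear HS by (simp_all add: relabel_def)
  then show ?thesis by (auto simp: execution_iff_prefix max_exec_iff)
qed

end

lemma exists_run_preserving_relabel:
  fixes \<rho> :: "('c, 'a::field) token list"
  assumes run: "is_run \<Omega> m \<tau> d \<rho>" and c: "c \<in> \<Omega>" "c' \<in> \<Omega>"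
  obtains \<sigma> where "bij_betw \<sigma> \<Omega> \<Omega>" "\<sigma> c = c'"
    "\<And>H. is_deal \<Omega> m \<tau> H \<Longrightarrow> execution \<Omega> m d H \<rho> \<Longrightarrow> execution \<Omega> m d (relabel \<sigma> H) \<rho>"
proof (cases "\<rho> = []")
  case True
  define \<sigma> where "\<sigma> = (\<lambda>x. if x = c then c' else if x = c' then c else x)"
  have "bij_betw \<sigma> \<Omega> \<Omega>"
    by (rule bij_betw_byWitness[where f'=\<sigma>]) (use c in \<open>auto simp: \<sigma>_def\<close>)
  then show ?thesis using that[of \<sigma>] True by (simp add: execution_def \<sigma>_def)
next
  case False
  obtain H0 where H0: "is_deal \<Omega> m \<tau> H0" "execution \<Omega> m d H0 \<rho>" using run by (auto simp: is_run_def)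
  then obtain f :: "'c \<Rightarrow> nat \<Rightarrow> 'a" where f: "f \<in> admissible \<Omega> d (H0 0)" "\<rho> ! 0 = Fmap f"
    using False execution_first_token by metis
  have fb: "bij_betw f \<Omega> (pts (Suc d))" using f by (simp add: admissible_def)
  then have "f c \<in> pts (Suc d)" "f c' \<in> pts (Suc d)" using c by (auto simp: bij_betw_def)
  then obtain u s where u: "u \<in> pts d" and us: "shear d u s (f c) = f c'" by (rule shear_transitive)
  obtain \<sigma> where sb: "bij_betw \<sigma> \<Omega> \<Omega>" and \<sigma>: "\<And>x. x \<in> \<Omega> \<Longrightarrow> f (\<sigma> x) = shear d u s (f x)"
    using shear_permutation[OF fb] by blast
  have "\<sigma> c \<in> \<Omega>" "f (\<sigma> c) = f c'" using sb c \<sigma> us by (auto simp: bij_betw_def)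
  then have "\<sigma> c = c'" using fb c by (auto simp: bij_betw_def inj_on_def)
  moreover have "execution \<Omega> m d (relabel \<sigma> H) \<rho>" if "is_deal \<Omega> m \<tau> H" "execution \<Omega> m d H \<rho>" for H
    using execution_relabel_shear[OF fb u \<sigma> that(2) False f(2)] is_deal_subset[OF that(1)] by blast
  ultimately show ?thesis using that sb by blast
qed

section \<open>Perfect safety\<close>

definition run_mass :: "'c set \<Rightarrow> nat \<Rightarrow> (nat \<Rightarrow> nat) \<Rightarrow> nat \<Rightarrow> ((nat \<Rightarrow> 'c set) \<Rightarrow> bool) \<Rightarrow> ('c, 'a::field) token list \<Rightarrow> real" where
  "run_mass \<Omega> m \<tau> d E \<rho> = (\<Sum>H\<in>{H. is_deal \<Omega> m \<tau> H \<and> execution \<Omega> m d H \<rho> \<and> E H}. exec_weight \<Omega> d \<rho> H)"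

lemma finite_admissible:
  "finite \<Omega> \<Longrightarrow> finite (admissible \<Omega> d X :: ('c \<Rightarrow> nat \<Rightarrow> 'a::{finite,field}) set)"
  by (rule finite_subset[OF _ finite_PiE[of \<Omega> "\<lambda>_. pts (Suc d)"]]) (auto simp: admissible_def finite_pts)

lemma prob_and_run_eq:
  assumes "finite \<Omega>"
  shows "prob_and_run \<Omega> m \<tau> d E \<rho> = run_mass \<Omega> m \<tau> d E \<rho> / real (card {H. is_deal \<Omega> m \<tau> H})"
proof -
  have fin: "finite {H. is_deal \<Omega> m \<tau> H \<and> E H}"
    by (rule finite_subset[OF _ finite_deals[OF assms]]) auto
  have "(\<Sum>H\<in>{H. is_deal \<Omega> m \<tau> H \<and> E H}. run_weight \<Omega> m d H \<rho>)
      = (\<Sum>H\<in>{H. is_deal \<Omega> m \<tau> H \<and> E H}. if execution \<Omega> m d H \<rho> then exec_weight \<Omega> d \<rho> H else 0)"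
    by (simp add: run_weight_eq)
  also have "\<dots> = (\<Sum>H\<in>{H \<in> {H. is_deal \<Omega> m \<tau> H \<and> E H}. execution \<Omega> m d H \<rho>}. exec_weight \<Omega> d \<rho> H)"
    by (rule sum.inter_filter[symmetric, OF fin])
  also have "{H \<in> {H. is_deal \<Omega> m \<tau> H \<and> E H}. execution \<Omega> m d H \<rho>}
      = {H. is_deal \<Omega> m \<tau> H \<and> execution \<Omega> m d H \<rho> \<and> E H}"
    by auto
  finally show ?thesis by (simp add: prob_and_run_def run_mass_def)
qed

lemma cond_prob_eq:
  assumes "finite \<Omega>" "is_run \<Omega> m \<tau> d \<rho>"
  shows "cond_prob \<Omega> m \<tau> d E \<rho> = run_mass \<Omega> m \<tau> d E \<rho> / run_mass \<Omega> m \<tau> d (\<lambda>_. True) \<rho>"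
proof -
  have "card {H. is_deal \<Omega> m \<tau> H} > 0"
    using assms finite_deals[OF assms(1)] by (auto simp: is_run_def card_gt_0_iff)
  then show ?thesis by (simp add: cond_prob_def prob_and_run_eq[OF assms(1)])
qed

lemma run_mass_pos:
  fixes \<rho> :: "('c, 'a::{finite,field}) token list"
  assumes fin: "finite \<Omega>" and run: "is_run \<Omega> m \<tau> d \<rho>"
  shows "run_mass \<Omega> m \<tau> d (\<lambda>_. True) \<rho> > 0"
proof -
  obtain H where H: "is_deal \<Omega> m \<tau> H" "execution \<Omega> m d H \<rho>" using run by (auto simp: is_run_def)
  have "exec_weight \<Omega> d \<rho> H > 0"
  proof (cases "\<rho> = []")
    case False
    then obtain f :: "'c \<Rightarrow> nat \<Rightarrow> 'a" where "f \<in> admissible \<Omega> d (H 0)"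
      using H(2) execution_first_token by metis
    then have "card (admissible \<Omega> d (H 0) :: ('c \<Rightarrow> nat \<Rightarrow> 'a) set) > 0"
      using finite_admissible[OF fin] by (auto simp: card_gt_0_iff)
    then show ?thesis by (simp add: exec_weight_def)
  qed (simp add: exec_weight_def)
  also have "\<dots> \<le> run_mass \<Omega> m \<tau> d (\<lambda>_. True) \<rho>"
    unfolding run_mass_def using H
    by (intro member_le_sum) (auto simp: exec_weight_nonneg intro: finite_subset[OF _ finite_deals[OF fin]])
  finally show ?thesis .
qed

lemma run_mass_hand_le:
  fixes \<rho> :: "('c, 'a::field) token list"
  assumes fin: "finite \<Omega>" and run: "is_run \<Omega> m \<tau> d \<rho>" and c: "c \<in> \<Omega>" "c' \<in> \<Omega>"
  shows "run_mass \<Omega> m \<tau> d (\<lambda>H. c \<in> H P) \<rho> \<le> run_mass \<Omega> m \<tau> d (\<lambda>H. c' \<in> H P) \<rho>"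
proof -
  obtain \<sigma> where sb: "bij_betw \<sigma> \<Omega> \<Omega>" and sc: "\<sigma> c = c'"
    and ex: "\<And>H. is_deal \<Omega> m \<tau> H \<Longrightarrow> execution \<Omega> m d H \<rho> \<Longrightarrow> execution \<Omega> m d (relabel \<sigma> H) \<rho>"
    using exists_run_preserving_relabel[OF run c] by blast
  let ?A = "{H. is_deal \<Omega> m \<tau> H \<and> execution \<Omega> m d H \<rho> \<and> c \<in> H P}"
  let ?B = "{H. is_deal \<Omega> m \<tau> H \<and> execution \<Omega> m d H \<rho> \<and> c' \<in> H P}"
  have injA: "inj_on (relabel \<sigma>) ?A" by (rule inj_on_subset[OF inj_on_relabel[OF sb]]) auto
  have sub: "relabel \<sigma> ` ?A \<subseteq> ?B"
    using is_deal_relabel[OF sb] ex sc by (auto simp: relabel_def)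
  have finB: "finite ?B" by (rule finite_subset[OF _ finite_deals[OF fin]]) auto
  have "run_mass \<Omega> m \<tau> d (\<lambda>H. c \<in> H P) \<rho> = (\<Sum>H\<in>?A. exec_weight \<Omega> d \<rho> (relabel \<sigma> H))"
    unfolding run_mass_def by (rule sum.cong) (auto simp: exec_weight_relabel[OF sb] is_deal_subset)
  also have "\<dots> = (\<Sum>H\<in>relabel \<sigma> ` ?A. exec_weight \<Omega> d \<rho> H)" by (simp add: sum.reindex[OF injA])
  also have "\<dots> \<le> (\<Sum>H\<in>?B. exec_weight \<Omega> d \<rho> H)"
    by (rule sum_mono2[OF finB sub]) (simp add: exec_weight_nonneg)
  finally show ?thesis by (simp add: run_mass_def)
qed

text \<open>Double counting: every deal contributes its weight once for each of the \<open>\<tau> P\<close> cards of \<open>P\<close>.\<close>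

lemma sum_run_mass_hand:
  assumes fin: "finite \<Omega>" and P: "P \<le> m"
  shows "(\<Sum>c\<in>\<Omega>. run_mass \<Omega> m \<tau> d (\<lambda>H. c \<in> H P) \<rho>) = real (\<tau> P) * run_mass \<Omega> m \<tau> d (\<lambda>_. True) \<rho>"
proof -
  define S where "S = {H. is_deal \<Omega> m \<tau> H \<and> execution \<Omega> m d H \<rho>}"
  let ?w = "exec_weight \<Omega> d \<rho>"
  have fS: "finite S" unfolding S_def by (rule finite_subset[OF _ finite_deals[OF fin]]) auto
  have "run_mass \<Omega> m \<tau> d (\<lambda>H. c \<in> H P) \<rho> = (\<Sum>H\<in>S. if c \<in> H P then ?w H else 0)" for c
  proof -
    have "{H. is_deal \<Omega> m \<tau> H \<and> execution \<Omega> m d H \<rho> \<and> c \<in> H P} = {H \<in> S. c \<in> H P}"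
      by (auto simp: S_def)
    then show ?thesis by (simp add: run_mass_def sum.inter_filter[OF fS])
  qed
  then have "(\<Sum>c\<in>\<Omega>. run_mass \<Omega> m \<tau> d (\<lambda>H. c \<in> H P) \<rho>) = (\<Sum>H\<in>S. \<Sum>c\<in>\<Omega>. if c \<in> H P then ?w H else 0)"
    using sum.swap by simp
  also have "\<dots> = (\<Sum>H\<in>S. real (\<tau> P) * ?w H)"
  proof (rule sum.cong[OF refl])
    fix H assume "H \<in> S"
    then have H: "is_deal \<Omega> m \<tau> H" by (simp add: S_def)
    have "(\<Sum>c\<in>\<Omega>. if c \<in> H P then ?w H else 0) = (\<Sum>c\<in>{c \<in> \<Omega>. c \<in> H P}. ?w H)"
      by (rule sum.inter_filter[symmetric, OF fin])
    also have "{c \<in> \<Omega>. c \<in> H P} = H P" using is_deal_subset[OF H] by auto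
    finally show "(\<Sum>c\<in>\<Omega>. if c \<in> H P then ?w H else 0) = real (\<tau> P) * ?w H"
      using H P by (simp add: is_deal_def)
  qed
  also have "\<dots> = real (\<tau> P) * run_mass \<Omega> m \<tau> d (\<lambda>_. True) \<rho>"
    by (simp add: run_mass_def S_def sum_distrib_left)
  finally show ?thesis .
qed

theorem perfectly_safe_shifted_projection:
  fixes \<rho> :: "('c, 'a::{finite,field}) token list"
  assumes fin: "finite \<Omega>" and card_\<Omega>: "card \<Omega> = (\<Sum>Q\<le>m. \<tau> Q)"
    and run: "is_run \<Omega> m \<tau> d \<rho>" and c: "c \<in> \<Omega>" and P: "P \<le> m"
  shows "cond_prob \<Omega> m \<tau> d (\<lambda>H. c \<in> H P) \<rho> = real (\<tau> P) / real (\<Sum>Q\<le>m. \<tau> Q)"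
proof -
  let ?M = "\<lambda>c. run_mass \<Omega> m \<tau> d (\<lambda>H. c \<in> H P) \<rho>"
  have "?M c' = ?M c" if "c' \<in> \<Omega>" for c'
    using run_mass_hand_le[OF fin run c that, of P] run_mass_hand_le[OF fin run that c, of P] by linarith
  then have "real (card \<Omega>) * ?M c = real (\<tau> P) * run_mass \<Omega> m \<tau> d (\<lambda>_. True) \<rho>"
    using sum_run_mass_hand[OF fin P, of \<tau> d \<rho>] by simp
  moreover have "real (card \<Omega>) > 0" using c fin by (auto simp: card_gt_0_iff)
  ultimately show ?thesis
    using run_mass_pos[OF fin run] card_\<Omega> by (simp add: cond_prob_eq[OF fin run] field_simps)
qed

section \<open>Informativity\<close>

lemma admissible_nonempty:
  assumes fin: "finite \<Omega>" and card_\<Omega>: "card \<Omega> = CARD('a) ^ (d + 1)" and X: "X \<subseteq> \<Omega>"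
    and card_X: "card X = CARD('a) ^ (d + 1) - CARD('a) ^ d"
  shows "(admissible \<Omega> d X :: ('c \<Rightarrow> nat \<Rightarrow> 'a::{finite,field}) set) \<noteq> {}"
proof -
  \<comment> \<open>Send \<open>X\<close> onto the complement of the hyperplane \<open>x\<^sub>d\<^sub>+\<^sub>1 = 0\<close>, which is \<open>pts d\<close>.\<close>
  let ?V = "pts d :: (nat \<Rightarrow> 'a) set"
  let ?W = "pts (Suc d) - ?V"
  have sub: "?V \<subseteq> pts (Suc d)" by (auto simp: pts_def)
  have "card ?W = card X"
    using sub card_X by (simp add: card_Diff_subset finite_pts card_pts)
  then obtain h1 where h1: "bij_betw h1 X ?W"
    using finite_same_card_bij[OF finite_subset[OF X fin]] finite_pts by (metis finite_Diff)
  have "card (\<Omega> - X) = card ?V"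
    using X fin card_\<Omega> card_X by (simp add: card_Diff_subset finite_subset card_pts power_increasing)
  then obtain h2 where h2: "bij_betw h2 (\<Omega> - X) ?V"
    using finite_same_card_bij[OF _ finite_pts] fin by blast
  define f where "f = restrict (\<lambda>x. if x \<in> X then h1 x else h2 x) \<Omega>"
  have "bij_betw f X ?W" using h1 X by (subst bij_betw_cong[of _ _ h1]) (auto simp: f_def)
  moreover have "bij_betw f (\<Omega> - X) ?V" using h2 by (subst bij_betw_cong[of _ _ h2]) (auto simp: f_def)
  ultimately have "bij_betw f (X \<union> (\<Omega> - X)) (?W \<union> ?V)" by (rule bij_betw_combine) auto
  moreover have "X \<union> (\<Omega> - X) = \<Omega>" "?W \<union> ?V = pts (Suc d)" using X sub by auto
  ultimately have fb: "bij_betw f \<Omega> (pts (Suc d))" by simp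
  then have "\<forall>x\<in>\<Omega>. f x \<in> pts (Suc d)" by (auto simp: bij_betw_def)
  then have "f \<in> \<Omega> \<rightarrow>\<^sub>E pts (Suc d)" by (simp add: f_def PiE_iff)
  moreover have "pts (Suc d) - f ` X = hyperplane d (\<lambda>_. 0) 0"
    using \<open>bij_betw f X ?W\<close> sub by (auto simp: hyperplane_zero bij_betw_def)
  then have "transversal d (pts (Suc d) - f ` X)" unfolding transversal_def by (auto simp: pts_def)
  ultimately have "f \<in> admissible \<Omega> d X" using fb by (simp add: admissible_def)
  then show ?thesis by blast
qed

lemma max_exec_if_terminal:
  assumes "terminal \<Omega> m d H \<rho>" "\<rho> \<noteq> []"
  shows "max_exec \<Omega> m d H \<rho>"
proof -
  obtain L' where L: "max_exec \<Omega> m d H (\<rho> @ L')"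
    using assms by (auto simp: terminal_def execution_iff_prefix)
  have "L' = []"
  proof (rule ccontr)
    assume "L' \<noteq> []"
    then have "max_exec \<Omega> m d H (\<rho> @ [hd L'] @ tl L')" using L by simp
    then have "hd L' \<in> Pi_prot \<Omega> m d H \<rho>" unfolding Pi_prot_def by blast
    then show False using assms(1) by (simp add: terminal_def)
  qed
  then show ?thesis using L by simp
qed

lemma max_exec_if_full_length:
  assumes "execution \<Omega> m d H \<rho>" "\<rho> \<noteq> []" "length \<rho> = Suc m"
  shows "max_exec \<Omega> m d H \<rho>"
proof -
  obtain L' where L: "max_exec \<Omega> m d H (\<rho> @ L')"
    using assms by (auto simp: execution_iff_prefix)
  then have "length (\<rho> @ L') = Suc m" by (metis max_exec_iff length_full_run)
  then show ?thesis using L assms(3) by simp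
qed

lemma hand_image_subset_complement:
  assumes H: "is_deal \<Omega> m \<tau> H" and f: "bij_betw f \<Omega> (pts (Suc d))" and k: "0 < k" "k \<le> m"
  shows "f ` H k \<subseteq> pts (Suc d) - f ` H 0"
proof -
  have sub: "H k \<subseteq> \<Omega>" "H 0 \<subseteq> \<Omega>" using H by (simp_all add: is_deal_subset)
  have inj: "inj_on f \<Omega>" and im: "f ` \<Omega> = pts (Suc d)" using f by (simp_all add: bij_betw_def)
  have "f ` H k \<inter> f ` H 0 = f ` (H k \<inter> H 0)" using inj_on_image_Int[OF inj sub] by simp
  also have "\<dots> = {}" using H k by (simp add: is_deal_def)
  finally show ?thesis using sub im by blast
qed

text \<open>This is where the lower bound \<open>\<tau>\<^sub>B\<^sub>k > q\<^sup>d\<^sup>-\<^sup>1\<close> enters.\<close>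

lemma transversal_eq_if_card_Int_gt:
  fixes V V' :: "(nat \<Rightarrow> 'a::{finite,field}) set"
  assumes V: "transversal d V" and V': "transversal d V'"
    and S: "S \<subseteq> V \<inter> V'" and card_S: "CARD('a) ^ (d - 1) < card S"
  shows "V = V'"
proof (rule ccontr)
  assume ne: "V \<noteq> V'"
  obtain a b a' b' where a: "a \<in> pts d" "V = hyperplane d a b" and a': "a' \<in> pts d" "V' = hyperplane d a' b'"
    using V V' by (auto simp: transversal_def)
  have "card S \<le> card (V \<inter> V')" using S by (intro card_mono) (simp_all add: a finite_hyperplane)
  also have "\<dots> \<le> CARD('a) ^ (d - 1)" using card_hyperplane_Int_le[OF a(1) a'(1)] ne a a' by simp
  finally show False using card_S by simp
qed

text \<open>Given \<open>f\<close>, the complement \<open>V\<close> of \<open>f[H\<^sub>A]\<close> recovers \<open>H\<^sub>A\<close>, and the announcements recover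
  the other hands since every \<open>f[H\<^sub>B\<^sub>k]\<close> lies in \<open>V\<close>, on which the shifted projection is injective.\<close>

lemma deal_eq_if_full_run_eq:
  assumes H: "is_deal \<Omega> m \<tau> H" and H': "is_deal \<Omega> m \<tau> H'" and f: "bij_betw f \<Omega> (pts (Suc d))"
    and V: "pts (Suc d) - f ` H' 0 = pts (Suc d) - f ` H 0" "transversal d (pts (Suc d) - f ` H 0)"
    and eq: "full_run \<Omega> m d H' f = full_run \<Omega> m d H f"
  shows "H' = H"
proof
  fix k
  have inj: "inj_on f \<Omega>" using f by (simp add: bij_betw_def)
  have sub: "H k \<subseteq> \<Omega>" "H' k \<subseteq> \<Omega>" for k using H H' by (simp_all add: is_deal_subset)
  consider "k = 0" | "0 < k" "k \<le> m" | "m < k" by linarith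
  then show "H' k = H k"
  proof cases
    case 1
    have "f ` \<Omega> = pts (Suc d)" using f by (simp add: bij_betw_def)
    then have "f ` H 0 \<subseteq> pts (Suc d)" "f ` H' 0 \<subseteq> pts (Suc d)" using sub by blast+
    then have "f ` H' 0 = f ` H 0" using V(1) by blast
    then show ?thesis using 1 inj sub by (simp add: inj_on_image_eq_iff)
  next
    case 2
    let ?V = "pts (Suc d) - f ` H 0"
    have runs: "map (\<lambda>k. Sub (proj_down d ?V ` f ` H' k)) [1..<Suc m] = map (\<lambda>k. Sub (proj_down d ?V ` f ` H k)) [1..<Suc m]"
      using eq V(1) by (simp add: full_run_def)
    have "k \<in> set [1..<Suc m]" using 2 by auto
    from bspec[OF runs[unfolded map_eq_conv] this]
    have "proj_down d ?V ` f ` H' k = proj_down d ?V ` f ` H k" by simp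
    moreover have "inj_on (proj_down d ?V) ?V"
      using V(2) inj_on_proj_down_hyperplane by (auto simp: transversal_def)
    moreover have "f ` H k \<subseteq> ?V" "f ` H' k \<subseteq> ?V"
      using hand_image_subset_complement[OF _ f 2] H H' V(1) by metis+
    ultimately have "f ` H' k = f ` H k" by (simp add: inj_on_image_eq_iff)
    then show ?thesis using inj sub by (simp add: inj_on_image_eq_iff)
  next
    case 3
    then show ?thesis using H H' by (simp add: is_deal_def)
  qed
qed

theorem informative_shifted_projection:
  fixes \<rho> :: "('c, 'a::{finite,field}) token list"
  assumes fin: "finite \<Omega>" and card_\<Omega>: "card \<Omega> = CARD('a) ^ (d + 1)"
    and \<tau>_A: "\<tau> 0 = CARD('a) ^ (d + 1) - CARD('a) ^ d"
    and \<tau>_B: "\<forall>k\<in>{1..m}. \<tau> k > CARD('a) ^ (d - 1)"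
    and H: "is_deal \<Omega> m \<tau> H" and t: "terminal \<Omega> m d H \<rho>" and P: "P \<le> m"
    and H': "is_deal \<Omega> m \<tau> H'" and e': "execution \<Omega> m d H' \<rho>" and eqP: "H' P = H P"
  shows "H' = H"
proof -
  have "\<rho> \<noteq> []"
    using t admissible_nonempty[OF fin card_\<Omega> is_deal_subset[OF H]] H \<tau>_A
    by (auto simp: terminal_def Pi_prot_Nil is_deal_def)
  then obtain f where f: "f \<in> admissible \<Omega> d (H 0)" "\<rho> = full_run \<Omega> m d H f"
              and f': "f \<in> admissible \<Omega> d (H' 0)" "\<rho> = full_run \<Omega> m d H' f"
    using max_exec_if_terminal[OF t] max_exec_if_full_length[OF e'] max_exec_iff
    by (metis hd_full_run length_full_run token.inject(1))
  have fb: "bij_betw f \<Omega> (pts (Suc d))" using f by (simp add: admissible_def)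
  have "pts (Suc d) - f ` H' 0 = pts (Suc d) - f ` H 0"
  proof (cases "P = 0")
    case False
    have "f ` H P \<subseteq> (pts (Suc d) - f ` H 0) \<inter> (pts (Suc d) - f ` H' 0)"
      using hand_image_subset_complement[OF _ fb] H H' P False eqP by (metis le_inf_iff not_gr0)
    moreover have "inj_on f (H P)"
      using fb is_deal_subset[OF H] by (auto simp: bij_betw_def intro: inj_on_subset)
    then have "card (f ` H P) = \<tau> P" using H P by (simp add: card_image is_deal_def)
    ultimately have "pts (Suc d) - f ` H 0 = pts (Suc d) - f ` H' 0"
      by (intro transversal_eq_if_card_Int_gt[of d _ _ "f ` H P"])
         (use f f' \<tau>_B P False in \<open>auto simp: admissible_def\<close>)
    then show ?thesis by simp
  qed (use eqP in simp)
  then show ?thesis using deal_eq_if_full_run_eq[OF H H' fb] f f' by (simp add: admissible_def)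
qed

theorem mainTheorem1:
  fixes F :: "'a::{finite,field} itself" and \<Omega> :: "'c set" and m d :: nat and \<tau> :: "nat \<Rightarrow> nat"
  assumes "m > 1"
    and "CARD('a) > m"
    and "d > 0"
    and "\<forall>P\<le>m. \<tau> P > 0"
    and "(\<Sum>P\<le>m. \<tau> P) = CARD('a) ^ (d + 1)"
    and "\<tau> 0 = CARD('a) ^ (d + 1) - CARD('a) ^ d"
    and "\<forall>k\<in>{1..m}. \<tau> k > CARD('a) ^ (d - 1)"
    and "finite \<Omega>" and "card \<Omega> = CARD('a) ^ (d + 1)"
  shows "informative TYPE('a) \<Omega> m \<tau> d \<and> perfectly_safe TYPE('a) \<Omega> m \<tau> d"
proof
  show "informative TYPE('a) \<Omega> m \<tau> d"
    unfolding informative_def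
    using informative_shifted_projection[OF assms(8,9,6,7)] by blast
  have "card \<Omega> = (\<Sum>Q\<le>m. \<tau> Q)" using assms(5,9) by simp
  then show "perfectly_safe TYPE('a) \<Omega> m \<tau> d"
    unfolding perfectly_safe_def
    using perfectly_safe_shifted_projection[OF assms(8)] by blast
qed

end
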